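(* Let $K$ be a nonempty, compact and convex subset of a real Hausdorff locally convex topological vector space $X$, let $Y$ be a closed, convex, bounded and symmetric ($Y=-Y$) subset of a locally convex topological vector space, let $U\subseteq K$ be self-segment-dense in $K$ and suppose that $\operatorname{co}(U)$ is segment-dense in $K$. Let $f:K\times Y\to\mathbb R$ be bounded and satisfy: (i) for every $y\in Y$ the map $x\mapsto f(x,y)$ is convex and continuous on $K$; (ii) for every $x\in K$ the map $y\mapsto f(x,y)$ is affine and continuous on $Y$. Then $\{f(u,\cdot)\}_{u\in U}$ is dense in $\{f(x,\cdot)\}_{x\in K}$ in $B(Y)$; that is, for every $k\in K$ and $\varepsilon>0$ there exists $u\in U$ with $\sup_{y\in Y}|f(u,y)-f(k,y)|<\varepsilon$.
   Context: $B(Y)$ is the space of bounded real functions on $Y$ with the uniform norm. $\operatorname{co}$ is the convex hull. Affine: $f(x,(1-t)y_1+ty_2)=(1-t)f(x,y_1)+tf(x,y_2)$ for $y_1,y_2\in Y$, $t\in[0,1]$. $[x,y]=\{x+t(y-x):t\in[0,1]\}$. Self-segment-dense: for convex $V$ and $U\subseteq V$, $U$ is self-segment-dense in $V$ if $V\subseteq\operatorname{cl}U$ and for all $x,y\in U$, $[x,y]\cap U$ is dense in $[x,y]$. Segment-dense: for convex $V$ and $U\subseteq V$, $U$ is segment-dense in $V$ if for each $x\in V$ there is $y\in U$ such that $x$ is a cluster point of $[x,y]\cap U$. *)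

theory Defs
  imports "HOL-Analysis.Analysis"
begin

definition lctvs :: "'a::{real_vector,topological_space} itself \<Rightarrow> bool" where
  "lctvs _ \<longleftrightarrow>
     continuous_on UNIV (\<lambda>p::'a \<times> 'a. fst p + snd p) \<and>
     continuous_on UNIV (\<lambda>p::real \<times> 'a. fst p *\<^sub>R snd p) \<and>
     (\<forall>V::'a set. open V \<and> 0 \<in> V \<longrightarrow> (\<exists>W. open W \<and> convex W \<and> 0 \<in> W \<and> W \<subseteq> V))"

definition tvs_bounded :: "'a::{real_vector,topological_space} set \<Rightarrow> bool" where
  "tvs_bounded Y \<longleftrightarrow>
     (\<forall>V. open V \<and> 0 \<in> V \<longrightarrow> (\<exists>t>0. Y \<subseteq> (\<lambda>v. t *\<^sub>R v) ` V))"

definition self_segment_dense :: "'a::{real_vector,topological_space} set \<Rightarrow> 'a set \<Rightarrow> bool" where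
  "self_segment_dense U V \<longleftrightarrow> U \<subseteq> V \<and> V \<subseteq> closure U \<and>
     (\<forall>x\<in>U. \<forall>y\<in>U. closed_segment x y \<subseteq> closure (closed_segment x y \<inter> U))"

definition segment_dense :: "'a::{real_vector,topological_space} set \<Rightarrow> 'a set \<Rightarrow> bool" where
  "segment_dense U V \<longleftrightarrow> U \<subseteq> V \<and>
     (\<forall>x\<in>V. \<exists>y\<in>U. x islimpt (closed_segment x y \<inter> U))"

definition affine_on :: "'b::real_vector set \<Rightarrow> ('b \<Rightarrow> real) \<Rightarrow> bool" where
  "affine_on Y g \<longleftrightarrow> (\<forall>y1\<in>Y. \<forall>y2\<in>Y. \<forall>t::real. 0 \<le> t \<and> t \<le> 1 \<longrightarrow>
     g ((1 - t) *\<^sub>R y1 + t *\<^sub>R y2) = (1 - t) * g y1 + t * g y2)"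

end

theory Submission
  imports Defs
begin

text \<open>Write \<open>convex_near K s x x'\<close> when \<open>x' \<in> (1 - \<sigma>) x + \<sigma> K\<close> for some \<open>\<sigma> \<le> s\<close>. Along such
  a step a convex function bounded by \<open>B\<close> on \<open>K\<close> increases by at most \<open>2 B s\<close>, uniformly in the
  function, so points that are near each other in both directions have uniformly close sections
  \<open>f(\<cdot>,y)\<close>. Self-segment-density makes every point of \<open>co(U)\<close> mutually near to points of \<open>U\<close> at
  every scale (such points form a convex set containing \<open>U\<close>), whereas segment-density of \<open>co(U)\<close>
  only gives \<open>x \<in> co(U)\<close> near \<open>k\<close> in one direction. The missing inequality comes from affinity in
  \<open>y\<close> and symmetry of \<open>Y\<close>: \<open>f(x,-y) = 2 f(x,0) - f(x,y)\<close>, so the one-sided bound at \<open>-y\<close> together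
  with continuity of \<open>f(\<cdot>,0)\<close> bounds \<open>f(k,y) - f(x,y)\<close> from above.\<close>

lemma lctvs_continuous_on_add:
  fixes f g :: "'c::topological_space \<Rightarrow> 'a::{real_vector,topological_space}"
  assumes "lctvs TYPE('a)" "continuous_on S f" "continuous_on S g"
  shows "continuous_on S (\<lambda>x. f x + g x)"
proof -
  have "continuous_on UNIV (\<lambda>p::'a \<times> 'a. fst p + snd p)"
    using assms(1) by (simp add: lctvs_def)
  from continuous_on_compose2[OF this continuous_on_Pair[OF assms(2,3)]] show ?thesis by simp
qed

lemma lctvs_continuous_on_scaleR:
  fixes f :: "'c::topological_space \<Rightarrow> real" and g :: "'c \<Rightarrow> 'a::{real_vector,topological_space}"
  assumes "lctvs TYPE('a)" "continuous_on S f" "continuous_on S g"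
  shows "continuous_on S (\<lambda>x. f x *\<^sub>R g x)"
proof -
  have "continuous_on UNIV (\<lambda>p::real \<times> 'a. fst p *\<^sub>R snd p)"
    using assms(1) by (simp add: lctvs_def)
  from continuous_on_compose2[OF this continuous_on_Pair[OF assms(2,3)]] show ?thesis by simp
qed

text \<open>Continuity of the parameter of a point on a nondegenerate segment: the line map is a
  continuous injection of \<open>[0,1]\<close>, so it maps the compact set of parameters at distance
  \<open>\<ge> \<eta>\<close> from \<open>c\<close> onto a closed set missing the point with parameter \<open>c\<close>.\<close>
lemma lctvs_segment_parameter_nhd:
  fixes a b :: "'a::{real_vector,t2_space}"
  assumes lc: "lctvs TYPE('a)" and "a \<noteq> b" and "\<eta> > 0"
  obtains N where "open N" "(1 - c) *\<^sub>R a + c *\<^sub>R b \<in> N"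
    "\<And>c'. 0 \<le> c' \<Longrightarrow> c' \<le> 1 \<Longrightarrow> (1 - c') *\<^sub>R a + c' *\<^sub>R b \<in> N \<Longrightarrow> \<bar>c' - c\<bar> < \<eta>"
proof -
  define \<phi> where "\<phi> = (\<lambda>c::real. (1 - c) *\<^sub>R a + c *\<^sub>R b)"
  define C where "C = {0..1::real} \<inter> {c'. \<eta> \<le> \<bar>c' - c\<bar>}"
  have "continuous_on UNIV \<phi>"
    unfolding \<phi>_def by (intro lctvs_continuous_on_add[OF lc] lctvs_continuous_on_scaleR[OF lc]
        continuous_intros)
  moreover have "compact C"
    unfolding C_def by (intro compact_Int_closed closed_Collect_le continuous_intros compact_Icc)
  ultimately have "closed (\<phi> ` C)"
    by (metis compact_imp_closed compact_continuous_image continuous_on_subset subset_UNIV)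
  moreover have "\<phi> c \<notin> \<phi> ` C"
  proof
    assume "\<phi> c \<in> \<phi> ` C"
    then obtain c' where "c' \<in> C" "(c - c') *\<^sub>R (b - a) = 0"
      unfolding \<phi>_def by (auto simp: algebra_simps)
    then show False using \<open>a \<noteq> b\<close> \<open>\<eta> > 0\<close> unfolding C_def by simp
  qed
  ultimately show ?thesis
    by (intro that[of "- (\<phi> ` C)"]) (auto simp: open_Compl not_le C_def \<phi>_def)
qed

definition convex_near :: "'a::real_vector set \<Rightarrow> real \<Rightarrow> 'a \<Rightarrow> 'a \<Rightarrow> bool" where
  "convex_near K s x x' \<longleftrightarrow>
     (\<exists>\<sigma> p. 0 \<le> \<sigma> \<and> \<sigma> \<le> s \<and> \<sigma> \<le> 1 \<and> p \<in> K \<and> x' = (1 - \<sigma>) *\<^sub>R x + \<sigma> *\<^sub>R p)"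

lemma convex_near_refl: "0 \<le> s \<Longrightarrow> x \<in> K \<Longrightarrow> convex_near K s x x"
  unfolding convex_near_def by (rule exI[of _ 0]) auto

lemma convex_near_mono: "convex_near K s x x' \<Longrightarrow> s \<le> s' \<Longrightarrow> convex_near K s' x x'"
  unfolding convex_near_def by force

lemma convex_near_mem: "convex K \<Longrightarrow> x \<in> K \<Longrightarrow> convex_near K s x x' \<Longrightarrow> x' \<in> K"
  unfolding convex_near_def by (auto simp: convex_alt)

lemma convex_near_trans:
  assumes K: "convex K" and x: "x \<in> K"
    and "convex_near K r x x'" and "convex_near K s x' x''"
  shows "convex_near K (r + s) x x''"
proof -
  obtain \<sigma>1 p where h1: "0 \<le> \<sigma>1" "\<sigma>1 \<le> r" "\<sigma>1 \<le> 1" "p \<in> K" "x' = (1 - \<sigma>1) *\<^sub>R x + \<sigma>1 *\<^sub>R p"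
    using assms(3) unfolding convex_near_def by blast
  obtain \<sigma>2 q where h2: "0 \<le> \<sigma>2" "\<sigma>2 \<le> s" "\<sigma>2 \<le> 1" "q \<in> K" "x'' = (1 - \<sigma>2) *\<^sub>R x' + \<sigma>2 *\<^sub>R q"
    using assms(4) unfolding convex_near_def by blast
  define \<sigma> where "\<sigma> = \<sigma>1 + \<sigma>2 - \<sigma>1 * \<sigma>2"
  have prod: "\<sigma>1 * \<sigma>2 \<le> \<sigma>1" "\<sigma>1 * \<sigma>2 \<le> \<sigma>2" "0 \<le> \<sigma>1 * \<sigma>2"
    using mult_left_le[OF h2(3) h1(1)] mult_left_le_one_le[OF h2(1) h1(1,3)] h1(1) h2(1) by simp_all
  have "0 \<le> (1 - \<sigma>1) * (1 - \<sigma>2)" using h1(3) h2(3) by simp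
  then have \<sigma>: "0 \<le> \<sigma>" "\<sigma> \<le> 1" "\<sigma> \<le> r + s"
    using h1(2) h2(2) prod unfolding \<sigma>_def by (simp_all add: algebra_simps)
  have \<sigma>_sum: "(1 - \<sigma>2) * \<sigma>1 + \<sigma>2 = \<sigma>" unfolding \<sigma>_def by (simp add: algebra_simps)
  have x'': "x'' = (1 - \<sigma>) *\<^sub>R x + (((1 - \<sigma>2) * \<sigma>1) *\<^sub>R p + \<sigma>2 *\<^sub>R q)"
    unfolding h2(5) h1(5) \<sigma>_def by (simp add: algebra_simps)
  show ?thesis
  proof (cases "\<sigma> = 0")
    case True
    then have "\<sigma>1 = 0" "\<sigma>2 = 0" using prod(1,2) h1(1) h2(1) unfolding \<sigma>_def by linarith+
    then have "x'' = x" using h1(5) h2(5) by simp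
    moreover have "0 \<le> r + s" using \<sigma>(1,3) by linarith
    ultimately show ?thesis using convex_near_refl[OF _ x] by simp
  next
    case False
    then have "\<sigma> > 0" using \<sigma>(1) by simp
    define pp where "pp = (((1 - \<sigma>2) * \<sigma>1) / \<sigma>) *\<^sub>R p + (\<sigma>2 / \<sigma>) *\<^sub>R q"
    have "pp \<in> K" unfolding pp_def
    proof (rule convexD[OF K h1(4) h2(4)])
      show "0 \<le> (1 - \<sigma>2) * \<sigma>1 / \<sigma>" "0 \<le> \<sigma>2 / \<sigma>" using \<open>\<sigma> > 0\<close> h1 h2 by simp_all
      show "(1 - \<sigma>2) * \<sigma>1 / \<sigma> + \<sigma>2 / \<sigma> = 1"
        using \<open>\<sigma> > 0\<close> \<sigma>_sum by (simp add: add_divide_distrib[symmetric])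
    qed
    moreover have "x'' = (1 - \<sigma>) *\<^sub>R x + \<sigma> *\<^sub>R pp"
      unfolding x'' pp_def using False by (simp add: scaleR_add_right)
    ultimately show ?thesis unfolding convex_near_def using \<sigma> by blast
  qed
qed

lemma convex_near_combination:
  assumes "convex K" "a \<in> K" "0 \<le> t" "t \<le> 1" "convex_near K s z w"
  shows "convex_near K s ((1 - t) *\<^sub>R a + t *\<^sub>R z) ((1 - t) *\<^sub>R a + t *\<^sub>R w)"
proof -
  obtain \<sigma> p where h: "0 \<le> \<sigma>" "\<sigma> \<le> s" "\<sigma> \<le> 1" "p \<in> K" "w = (1 - \<sigma>) *\<^sub>R z + \<sigma> *\<^sub>R p"
    using assms(5) unfolding convex_near_def by blast
  have "(1 - t) *\<^sub>R a + t *\<^sub>R p \<in> K" using assms h(4) by (simp add: convex_alt)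
  moreover have "(1 - t) *\<^sub>R a + t *\<^sub>R w =
      (1 - \<sigma>) *\<^sub>R ((1 - t) *\<^sub>R a + t *\<^sub>R z) + \<sigma> *\<^sub>R ((1 - t) *\<^sub>R a + t *\<^sub>R p)"
    unfolding h(5) by (simp add: algebra_simps)
  ultimately show ?thesis unfolding convex_near_def using h by blast
qed

lemma convex_on_convex_near_le:
  assumes "convex_on K g" "x \<in> K" "\<And>z. z \<in> K \<Longrightarrow> \<bar>g z\<bar> \<le> B" "convex_near K s x x'"
  shows "g x' - g x \<le> 2 * B * s"
proof -
  obtain \<sigma> p where h: "0 \<le> \<sigma>" "\<sigma> \<le> s" "\<sigma> \<le> 1" "p \<in> K" "x' = (1 - \<sigma>) *\<^sub>R x + \<sigma> *\<^sub>R p"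
    using assms(4) unfolding convex_near_def by blast
  have "g x' \<le> (1 - \<sigma>) * g x + \<sigma> * g p" unfolding h(5) using convex_onD[OF assms(1)] h assms(2) by blast
  also have "\<dots> = g x + \<sigma> * (g p - g x)" by (simp add: algebra_simps)
  also have "\<sigma> * (g p - g x) \<le> \<sigma> * (2 * B)"
    using assms(3)[OF assms(2)] assms(3)[OF h(4)] h(1) by (intro mult_left_mono) auto
  also have "\<sigma> * (2 * B) \<le> s * (2 * B)" using h assms(3)[OF assms(2)] by (intro mult_right_mono) auto
  finally show ?thesis by (simp add: algebra_simps)
qed

lemma convex_near_segment_forward:
  fixes u v :: "'a::real_vector"
  assumes "0 \<le> a" "a \<le> b" "b \<le> 1" "a < 1" "b - a \<le> s * (1 - a)" "v \<in> K"
  shows "convex_near K s ((1 - a) *\<^sub>R u + a *\<^sub>R v) ((1 - b) *\<^sub>R u + b *\<^sub>R v)"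
proof -
  define \<sigma> where "\<sigma> = (b - a) / (1 - a)"
  have "\<sigma> * (1 - a) = b - a" using assms unfolding \<sigma>_def by simp
  then have "(1 - \<sigma>) * a + \<sigma> = b" by (simp add: algebra_simps)
  moreover have "0 \<le> \<sigma>" "\<sigma> \<le> s" "\<sigma> \<le> 1" using assms unfolding \<sigma>_def by (simp_all add: field_simps)
  moreover have "(1 - \<sigma>) *\<^sub>R ((1 - a) *\<^sub>R u + a *\<^sub>R v) + \<sigma> *\<^sub>R v =
      (1 - ((1 - \<sigma>) * a + \<sigma>)) *\<^sub>R u + ((1 - \<sigma>) * a + \<sigma>) *\<^sub>R v"
    by (simp add: algebra_simps)
  ultimately show ?thesis unfolding convex_near_def using assms(6) by metis
qed

lemma convex_near_segment_backward:
  fixes u v :: "'a::real_vector"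
  assumes "0 \<le> a" "a \<le> b" "0 < b" "b - a \<le> s * b" "u \<in> K"
  shows "convex_near K s ((1 - b) *\<^sub>R u + b *\<^sub>R v) ((1 - a) *\<^sub>R u + a *\<^sub>R v)"
proof -
  define \<sigma> where "\<sigma> = (b - a) / b"
  have "\<sigma> * b = b - a" using assms unfolding \<sigma>_def by simp
  then have "(1 - \<sigma>) * b = a" by (simp add: algebra_simps)
  moreover have "0 \<le> \<sigma>" "\<sigma> \<le> s" "\<sigma> \<le> 1" using assms unfolding \<sigma>_def by (simp_all add: field_simps)
  moreover have "(1 - \<sigma>) *\<^sub>R ((1 - b) *\<^sub>R u + b *\<^sub>R v) + \<sigma> *\<^sub>R u =
      (1 - (1 - \<sigma>) * b) *\<^sub>R u + ((1 - \<sigma>) * b) *\<^sub>R v"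
    by (simp add: algebra_simps)
  ultimately show ?thesis unfolding convex_near_def using assms(5) by metis
qed

lemma convex_near_segment:
  fixes u v :: "'a::real_vector"
  assumes "0 < a" "a < 1" "0 \<le> b" "b \<le> 1" "\<bar>b - a\<bar> < s * min a (1 - a)" "u \<in> K" "v \<in> K"
  shows "convex_near K s ((1 - a) *\<^sub>R u + a *\<^sub>R v) ((1 - b) *\<^sub>R u + b *\<^sub>R v) \<and>
         convex_near K s ((1 - b) *\<^sub>R u + b *\<^sub>R v) ((1 - a) *\<^sub>R u + a *\<^sub>R v)"
proof -
  have "0 < s * min a (1 - a)" using assms(5) by linarith
  moreover have "0 < min a (1 - a)" using assms(1,2) by simp
  ultimately have "0 \<le> s" by (simp add: zero_less_mult_iff)
  then have m: "s * min a (1 - a) \<le> s * (1 - a)" "s * min a (1 - a) \<le> s * a"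
    by (simp_all add: mult_left_mono)
  show ?thesis
  proof (cases "a \<le> b")
    case True
    have "s * a \<le> s * b" using \<open>0 \<le> s\<close> True by (simp add: mult_left_mono)
    then show ?thesis using assms True m
      by (intro conjI convex_near_segment_forward convex_near_segment_backward) auto
  next
    case False
    have "s * (1 - a) \<le> s * (1 - b)" using \<open>0 \<le> s\<close> False by (simp add: mult_left_mono)
    moreover have swap: "(1 - c) *\<^sub>R u + c *\<^sub>R v = (1 - (1 - c)) *\<^sub>R v + (1 - c) *\<^sub>R u" for c
      by simp
    ultimately show ?thesis unfolding swap[of a] swap[of b] using assms False m
      by (intro conjI convex_near_segment_forward convex_near_segment_backward) auto
  qed
qed

lemma self_segment_dense_convex_near:
  fixes K U :: "'a::{real_vector,t2_space} set"
  assumes lc: "lctvs TYPE('a)" and ssd: "self_segment_dense U K"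
    and u1: "u1 \<in> U" and u2: "u2 \<in> U" and z: "z \<in> closed_segment u1 u2" and "s > 0"
  obtains w where "w \<in> U" "convex_near K s z w" "convex_near K s w z"
proof -
  have UK: "U \<subseteq> K" using ssd by (simp add: self_segment_dense_def)
  obtain a where a: "0 \<le> a" "a \<le> 1" "z = (1 - a) *\<^sub>R u1 + a *\<^sub>R u2"
    using z unfolding closed_segment_def by blast
  show ?thesis
  proof (cases "u1 = u2 \<or> a = 0 \<or> a = 1")
    case True
    then have "z \<in> U" using a u1 u2 by (auto simp: algebra_simps)
    moreover have "convex_near K s z z"
      using \<open>z \<in> U\<close> UK \<open>s > 0\<close> by (intro convex_near_refl) auto
    ultimately show ?thesis using that by blast
  next
    case False
    then have "u1 \<noteq> u2" and a': "0 < a" "a < 1" using a by auto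
    have "s * min a (1 - a) > 0" using a' \<open>s > 0\<close> by simp
    then obtain N where N: "open N" "(1 - a) *\<^sub>R u1 + a *\<^sub>R u2 \<in> N"
      "\<And>c. 0 \<le> c \<Longrightarrow> c \<le> 1 \<Longrightarrow> (1 - c) *\<^sub>R u1 + c *\<^sub>R u2 \<in> N \<Longrightarrow> \<bar>c - a\<bar> < s * min a (1 - a)"
      by (rule lctvs_segment_parameter_nhd[OF lc \<open>u1 \<noteq> u2\<close>, where c = a]) blast
    have "z \<in> closure (closed_segment u1 u2 \<inter> U)"
      using ssd u1 u2 z unfolding self_segment_dense_def by blast
    then obtain w where w: "w \<in> N" "w \<in> closed_segment u1 u2" "w \<in> U"
      using open_Int_closure_eq_empty[OF N(1)] N(2) a(3) by blast
    then obtain b where b: "0 \<le> b" "b \<le> 1" "w = (1 - b) *\<^sub>R u1 + b *\<^sub>R u2"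
      unfolding closed_segment_def by blast
    have "\<bar>b - a\<bar> < s * min a (1 - a)" using N(3)[OF b(1,2)] w(1) b(3) by simp
    moreover have "u1 \<in> K" "u2 \<in> K" using u1 u2 UK by auto
    ultimately have "convex_near K s z w \<and> convex_near K s w z"
      unfolding a(3) b(3) by (rule convex_near_segment[OF a' b(1,2)])
    then show ?thesis using w(3) that by blast
  qed
qed

definition convex_near_approximable :: "'a::real_vector set \<Rightarrow> 'a set \<Rightarrow> 'a \<Rightarrow> bool" where
  "convex_near_approximable K U x \<longleftrightarrow>
     (\<forall>s>0. \<exists>u\<in>U. convex_near K s x u \<and> convex_near K s u x)"

text \<open>To approximate a convex combination of two approximable points, replace them one at a
  time by their approximants from \<open>U\<close> and then use self-segment-density on the segment
  between these approximants; four steps of size \<open>s/4\<close>.\<close>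
lemma convex_convex_near_approximable:
  fixes K U :: "'a::{real_vector,t2_space} set"
  assumes lc: "lctvs TYPE('a)" and K: "convex K" and ssd: "self_segment_dense U K"
  shows "convex {x \<in> K. convex_near_approximable K U x}"
  unfolding convex_alt
proof (intro ballI allI impI)
  fix x1 x2 and t :: real
  assume x1: "x1 \<in> {x \<in> K. convex_near_approximable K U x}"
    and x2: "x2 \<in> {x \<in> K. convex_near_approximable K U x}" and t: "0 \<le> t \<and> t \<le> 1"
  have UK: "U \<subseteq> K" using ssd by (simp add: self_segment_dense_def)
  have x1K: "x1 \<in> K" and x2K: "x2 \<in> K" using x1 x2 by auto
  let ?z = "(1 - t) *\<^sub>R x1 + t *\<^sub>R x2"
  have zK: "?z \<in> K" using K x1K x2K t by (simp add: convex_alt)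
  have "convex_near_approximable K U ?z" unfolding convex_near_approximable_def
  proof (intro allI impI)
    fix s :: real assume "s > 0"
    then have s4: "s/4 > 0" by simp
    obtain w1 where w1: "w1 \<in> U" "convex_near K (s/4) x1 w1" "convex_near K (s/4) w1 x1"
      using x1 s4 unfolding convex_near_approximable_def by blast
    obtain w2 where w2: "w2 \<in> U" "convex_near K (s/4) x2 w2" "convex_near K (s/4) w2 x2"
      using x2 s4 unfolding convex_near_approximable_def by blast
    have w2K: "w2 \<in> K" using w2 UK by auto
    let ?z1 = "(1 - t) *\<^sub>R x1 + t *\<^sub>R w2"
    let ?z2 = "(1 - t) *\<^sub>R w1 + t *\<^sub>R w2"
    have a1: "convex_near K (s/4) ?z ?z1" "convex_near K (s/4) ?z1 ?z"
      using convex_near_combination[OF K x1K _ _ w2(2)]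
        convex_near_combination[OF K x1K _ _ w2(3)] t by auto
    have swap: "(1 - t) *\<^sub>R y + t *\<^sub>R w2 = (1 - (1 - t)) *\<^sub>R w2 + (1 - t) *\<^sub>R y" for y
      by simp
    have a2: "convex_near K (s/4) ?z1 ?z2" "convex_near K (s/4) ?z2 ?z1"
      unfolding swap[of x1] swap[of w1]
      by (rule convex_near_combination[OF K w2K _ _ w1(2)]; use t in simp)
         (rule convex_near_combination[OF K w2K _ _ w1(3)]; use t in simp)
    have "?z2 \<in> closed_segment w1 w2" unfolding closed_segment_def using t by blast
    then obtain u where u: "u \<in> U" "convex_near K (s/4) ?z2 u" "convex_near K (s/4) u ?z2"
      using self_segment_dense_convex_near[OF lc ssd w1(1) w2(1) _ s4] by metis
    have z1K: "?z1 \<in> K" using convex_near_mem[OF K zK a1(1)] .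
    have uK: "u \<in> K" using u UK by auto
    have "convex_near K (s/4 + s/4 + s/4) ?z u"
      by (rule convex_near_trans[OF K zK convex_near_trans[OF K zK a1(1) a2(1)] u(2)])
    moreover have "convex_near K (s/4 + s/4 + s/4) u ?z"
      by (rule convex_near_trans[OF K uK convex_near_trans[OF K uK u(3) a2(2)] a1(2)])
    ultimately show "\<exists>u\<in>U. convex_near K s ?z u \<and> convex_near K s u ?z"
      using u(1) \<open>s > 0\<close> convex_near_mono[of K "s/4 + s/4 + s/4" _ _ s] by auto
  qed
  then show "?z \<in> {x \<in> K. convex_near_approximable K U x}" using zK by blast
qed

lemma convex_hull_convex_near_approximable:
  fixes K U :: "'a::{real_vector,t2_space} set"
  assumes "lctvs TYPE('a)" "convex K" "self_segment_dense U K" "x \<in> convex hull U"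
  shows "convex_near_approximable K U x"
proof -
  have "U \<subseteq> {x \<in> K. convex_near_approximable K U x}"
  proof
    fix u assume "u \<in> U"
    moreover have "U \<subseteq> K" using assms(3) by (simp add: self_segment_dense_def)
    ultimately have "convex_near K s u u" if "s > 0" for s
      using that by (auto intro: convex_near_refl)
    then show "u \<in> {x \<in> K. convex_near_approximable K U x}"
      unfolding convex_near_approximable_def using \<open>u \<in> U\<close> \<open>U \<subseteq> K\<close> by blast
  qed
  then have "convex hull U \<subseteq> {x \<in> K. convex_near_approximable K U x}"
    by (intro hull_minimal convex_convex_near_approximable assms(1-3))
  then show ?thesis using assms(4) by blast
qed

text \<open>Only a one-sided approximation: the points of \<open>V\<close> near \<open>k\<close> lie on a segment from \<open>k\<close>.\<close>
lemma segment_dense_convex_near: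
  fixes K V :: "'a::{real_vector,t2_space} set" and g :: "'a \<Rightarrow> real"
  assumes lc: "lctvs TYPE('a)" and sd: "segment_dense V K" and "k \<in> K"
    and g: "continuous_on K g" and "\<eta> > 0" "\<epsilon> > 0"
  obtains x where "x \<in> V" "convex_near K \<eta> k x" "\<bar>g x - g k\<bar> < \<epsilon>"
proof -
  obtain y where y: "y \<in> V" "k islimpt (closed_segment k y \<inter> V)"
    using sd \<open>k \<in> K\<close> unfolding segment_dense_def by blast
  have VK: "V \<subseteq> K" using sd by (simp add: segment_dense_def)
  show ?thesis
  proof (cases "k = y")
    case True
    then show ?thesis using y(1) \<open>k \<in> K\<close> \<open>\<eta> > 0\<close> \<open>\<epsilon> > 0\<close>
      by (intro that[of k]) (auto intro: convex_near_refl)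
  next
    case False
    obtain A where A: "open A" "k \<in> A" "\<And>z. z \<in> K \<Longrightarrow> z \<in> A \<Longrightarrow> g z \<in> ball (g k) \<epsilon>"
      using g \<open>k \<in> K\<close> \<open>\<epsilon> > 0\<close> unfolding continuous_on_topological by (metis centre_in_ball open_ball)
    obtain N where N: "open N" "(1 - 0) *\<^sub>R k + 0 *\<^sub>R y \<in> N"
      "\<And>c. 0 \<le> c \<Longrightarrow> c \<le> 1 \<Longrightarrow> (1 - c) *\<^sub>R k + c *\<^sub>R y \<in> N \<Longrightarrow> \<bar>c - 0\<bar> < \<eta>"
      by (rule lctvs_segment_parameter_nhd[OF lc False \<open>\<eta> > 0\<close>, where c = 0]) blast
    have "k \<in> A \<inter> N" using A N by simp
    then obtain x where x: "x \<in> closed_segment k y" "x \<in> V" "x \<in> A \<inter> N"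
      using y(2) A(1) N(1) unfolding islimpt_def by (meson IntE open_Int)
    obtain c where c: "0 \<le> c" "c \<le> 1" "x = (1 - c) *\<^sub>R k + c *\<^sub>R y"
      using x(1) unfolding closed_segment_def by blast
    have "c < \<eta>" using N(3)[OF c(1,2)] x(3) c(3) by simp
    then have "convex_near K \<eta> k x"
      unfolding convex_near_def using c y(1) VK by (intro exI[of _ c] exI[of _ y]) auto
    moreover have "\<bar>g x - g k\<bar> < \<epsilon>"
      using A(3)[of x] x VK by (auto simp: dist_real_def abs_minus_commute)
    ultimately show ?thesis using x(2) that by blast
  qed
qed

lemma affine_on_reflect:
  assumes "affine_on Y h" "y \<in> Y" "- y \<in> Y"
  shows "h (- y) = 2 * h 0 - h y"
proof -
  have "h ((1 - 1/2) *\<^sub>R y + (1/2) *\<^sub>R (- y)) = (1 - 1/2) * h y + (1/2) * h (- y)"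
    using assms(1)[unfolded affine_on_def, rule_format, OF assms(2,3), of "1/2"] by simp
  then show ?thesis by simp
qed

text \<open>The lower bound uses the upper bound at \<open>-y\<close>, converted by \<open>affine_on_reflect\<close>.\<close>
lemma convex_near_uniform_estimate:
  fixes f :: "'a::real_vector \<Rightarrow> 'b::real_vector \<Rightarrow> real"
  assumes convex: "\<And>y. y \<in> Y \<Longrightarrow> convex_on K (\<lambda>x. f x y)"
    and affine: "\<And>x. x \<in> K \<Longrightarrow> affine_on Y (f x)"
    and bounded: "\<And>x y. x \<in> K \<Longrightarrow> y \<in> Y \<Longrightarrow> \<bar>f x y\<bar> \<le> B"
    and sym: "\<And>y. y \<in> Y \<Longrightarrow> - y \<in> Y"
    and K: "k \<in> K" "x \<in> K" "u \<in> K"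
    and near: "convex_near K s k x" "convex_near K s x u" "convex_near K s u x"
    and close: "\<bar>f x 0 - f k 0\<bar> \<le> \<delta>" and y: "y \<in> Y"
  shows "\<bar>f u y - f k y\<bar> \<le> 4 * B * s + 2 * \<delta>"
proof -
  have step: "f x2 z - f x1 z \<le> 2 * B * s"
    if "z \<in> Y" "x1 \<in> K" "convex_near K s x1 x2" for z x1 x2
    using convex_on_convex_near_le[OF convex[OF that(1)] that(2) bounded[OF _ that(1)] that(3)] .
  have "f x (- y) - f k (- y) \<le> 2 * B * s" using step[OF sym[OF y] K(1) near(1)] .
  moreover have "f x (- y) = 2 * f x 0 - f x y" "f k (- y) = 2 * f k 0 - f k y"
    using affine_on_reflect[OF affine y sym[OF y]] K by auto
  moreover have "f x y - f k y \<le> 2 * B * s" "f u y - f x y \<le> 2 * B * s" "f x y - f u y \<le> 2 * B * s"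
    using step[OF y K(1) near(1)] step[OF y K(2) near(2)] step[OF y K(3) near(3)] .
  ultimately show ?thesis using close unfolding abs_le_iff by linarith
qed

lemma convex_affine_uniform_approximation:
  fixes K U :: "'a::{real_vector,t2_space} set" and f :: "'a \<Rightarrow> 'b::real_vector \<Rightarrow> real"
  assumes lc: "lctvs TYPE('a)" and K: "convex K" and "k \<in> K"
    and ssd: "self_segment_dense U K" and sd: "segment_dense (convex hull U) K"
    and sym: "\<And>y. y \<in> Y \<Longrightarrow> - y \<in> Y" and "0 \<in> Y"
    and "B > 0" and bounded: "\<And>x y. x \<in> K \<Longrightarrow> y \<in> Y \<Longrightarrow> \<bar>f x y\<bar> \<le> B"
    and convex: "\<And>y. y \<in> Y \<Longrightarrow> convex_on K (\<lambda>x. f x y)"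
    and affine: "\<And>x. x \<in> K \<Longrightarrow> affine_on Y (f x)"
    and cont: "continuous_on K (\<lambda>x. f x 0)" and "\<epsilon> > 0"
  obtains u where "u \<in> U" "\<forall>y\<in>Y. \<bar>f u y - f k y\<bar> \<le> \<epsilon>"
proof -
  define \<eta> where "\<eta> = \<epsilon> / (8 * B)"
  have "\<eta> > 0" "4 * B * \<eta> = \<epsilon> / 2" unfolding \<eta>_def using \<open>\<epsilon> > 0\<close> \<open>B > 0\<close> by simp_all
  have "\<epsilon> / 4 > 0" using \<open>\<epsilon> > 0\<close> by simp
  then obtain x where x: "x \<in> convex hull U" "convex_near K \<eta> k x" "\<bar>f x 0 - f k 0\<bar> < \<epsilon> / 4"
    by (rule segment_dense_convex_near[OF lc sd \<open>k \<in> K\<close> cont \<open>\<eta> > 0\<close>])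
  obtain u where u: "u \<in> U" "convex_near K \<eta> x u" "convex_near K \<eta> u x"
    using convex_hull_convex_near_approximable[OF lc K ssd x(1)] \<open>\<eta> > 0\<close>
    unfolding convex_near_approximable_def by blast
  have "x \<in> K" "u \<in> K" using convex_near_mem[OF K \<open>k \<in> K\<close> x(2)] u(1) ssd
    by (auto simp: self_segment_dense_def)
  then have "\<bar>f u y - f k y\<bar> \<le> 4 * B * \<eta> + 2 * (\<epsilon> / 4)" if "y \<in> Y" for y
    using convex_near_uniform_estimate[OF convex affine bounded sym \<open>k \<in> K\<close> _ _ x(2) u(2,3)
        less_imp_le[OF x(3)] that] by blast
  then show ?thesis using u(1) \<open>4 * B * \<eta> = \<epsilon> / 2\<close> that by auto
qed

theorem mainTheorem18:
  fixes K U :: "'a::{real_vector,t2_space} set"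
    and Y :: "'b::{real_vector,topological_space} set"
    and f :: "'a \<Rightarrow> 'b \<Rightarrow> real"
  assumes X_lc: "lctvs TYPE('a)"
    and Y_lc: "lctvs TYPE('b)"
    and K_ne: "K \<noteq> {}" and K_compact: "compact K" and K_convex: "convex K"
    and Y_closed: "closed Y" and Y_convex: "convex Y" and Y_bounded: "tvs_bounded Y"
    and Y_sym: "uminus ` Y = Y"
    and U_ssd: "self_segment_dense U K"
    and coU_sd: "segment_dense (convex hull U) K"
    and f_bounded: "\<exists>B. \<forall>x\<in>K. \<forall>y\<in>Y. \<bar>f x y\<bar> \<le> B"
    and f_convex: "\<And>y. y \<in> Y \<Longrightarrow> convex_on K (\<lambda>x. f x y)"
    and f_cont1: "\<And>y. y \<in> Y \<Longrightarrow> continuous_on K (\<lambda>x. f x y)"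
    and f_affine: "\<And>x. x \<in> K \<Longrightarrow> affine_on Y (f x)"
    and f_cont2: "\<And>x. x \<in> K \<Longrightarrow> continuous_on Y (f x)"
  shows "\<forall>k\<in>K. \<forall>\<epsilon>>0. \<exists>u\<in>U. \<exists>\<delta><\<epsilon>. \<forall>y\<in>Y. \<bar>f u y - f k y\<bar> \<le> \<delta>"
proof (intro ballI allI impI)
  fix k and \<epsilon> :: real
  assume "k \<in> K" and "\<epsilon> > 0"
  have sym: "\<And>y. y \<in> Y \<Longrightarrow> - y \<in> Y" using Y_sym by force
  obtain B0 where B0: "\<forall>x\<in>K. \<forall>y\<in>Y. \<bar>f x y\<bar> \<le> B0" using f_bounded by blast
  have "\<bar>B0\<bar> + 1 > 0" and B: "\<And>x y. x \<in> K \<Longrightarrow> y \<in> Y \<Longrightarrow> \<bar>f x y\<bar> \<le> \<bar>B0\<bar> + 1"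
    using B0 by force+
  show "\<exists>u\<in>U. \<exists>\<delta><\<epsilon>. \<forall>y\<in>Y. \<bar>f u y - f k y\<bar> \<le> \<delta>"
  proof (cases "Y = {}")
    case True
    have "U \<noteq> {}" using K_ne U_ssd unfolding self_segment_dense_def by auto
    then show ?thesis using True \<open>\<epsilon> > 0\<close> by blast
  next
    case False
    then obtain y where "y \<in> Y" by blast
    then have "0 \<in> Y" using convexD[OF Y_convex \<open>y \<in> Y\<close> sym[OF \<open>y \<in> Y\<close>], of "1/2" "1/2"] by simp
    have "\<epsilon> / 2 > 0" using \<open>\<epsilon> > 0\<close> by simp
    then obtain u where "u \<in> U" "\<forall>y\<in>Y. \<bar>f u y - f k y\<bar> \<le> \<epsilon> / 2"
      using convex_affine_uniform_approximation[OF X_lc K_convex \<open>k \<in> K\<close> U_ssd coU_sd sym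
          \<open>0 \<in> Y\<close> \<open>\<bar>B0\<bar> + 1 > 0\<close> B f_convex f_affine f_cont1[OF \<open>0 \<in> Y\<close>]] by blast
    then show ?thesis using \<open>\<epsilon> > 0\<close> by (intro bexI[of _ u] exI[of _ "\<epsilon> / 2"]) auto
  qed
qed

end
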